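(* Let $(F,v)$ be a valued field, $(V,q)$ a quadratic space over $F$, and $\alpha$ a $v$-norm on $V$ which is compatible of depth $\varepsilon$ with $q$, where $0\le\varepsilon<v(2)$. Then there are $2$-dimensional subspaces $V_1,\dots,V_n$ of $V$ such that, with $q_i=q|_{V_i}$ and $\alpha_i=\alpha|_{V_i}$: (1) $(V,q)=(V_1,q_1)\perp\dots\perp(V_n,q_n)$ (orthogonal sum with respect to the polar form $b_q$); (2) each $\alpha_i$ is a $v$-norm on $V_i$ which is $\varepsilon$-compatible with $q_i$, and $\alpha=\alpha_1\oplus\dots\oplus\alpha_n$, i.e. $\alpha(x_1+\dots+x_n)=\min_i\alpha(x_i)$ for $x_i\in V_i$.
   Context: $F$ is a field with valuation $v\colon F\to\Gamma\cup\{\infty\}$, $\Gamma$ divisible totally ordered abelian group; $v(2)=\infty$ iff $\operatorname{char}F=2$. A $v$-norm on a finite-dimensional $F$-space $V$ is $\alpha\colon V\to\Gamma\cup\{\infty\}$ with $\alpha(x)=\infty\iff x=0$, $\alpha(\lambda x)=v(\lambda)+\alpha(x)$, $\alpha(x+y)\ge\min(\alpha(x),\alpha(y))$, admitting a basis $(e_i)$ with $\alpha(\sum\lambda_ie_i)=\min\alpha(\lambda_ie_i)$. For $\varepsilon\in\Gamma$, $\varepsilon\ge0$, $\alpha$ is $\varepsilon$-compatible (compatible of depth $\varepsilon$) with $q$, whose polar form is $b_q(x,y)=q(x+y)-q(x)-q(y)$, if (a) $v(b_q(x,y))\ge\alpha(x)+\alpha(y)+\varepsilon$ for all $x,y$;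 (b) $v(q(x))\ge2\alpha(x)$ for all $x$; (c) for every $x\ne0$ there is $y\ne0$ with $v(b_q(x,y))=\alpha(x)+\alpha(y)+\varepsilon$. *)

theory Defs
  imports Complex_Main
begin

datatype 'g ext = Fin 'g | Infty

instantiation ext :: (linorder) linorder
begin
fun less_eq_ext :: "'a ext \<Rightarrow> 'a ext \<Rightarrow> bool" where
  "less_eq_ext _ Infty = True"
| "less_eq_ext Infty (Fin _) = False"
| "less_eq_ext (Fin x) (Fin y) = (x \<le> y)"
definition less_ext :: "'a ext \<Rightarrow> 'a ext \<Rightarrow> bool" where
  "less_ext x y = (x \<le> y \<and> \<not> y \<le> x)"
instance
proof
  fix x y z :: "'a ext"
  show "(x < y) = (x \<le> y \<and> \<not> y \<le> x)" by (simp add: less_ext_def)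
  show "x \<le> x" by (cases x) auto
  show "x \<le> y \<Longrightarrow> y \<le> z \<Longrightarrow> x \<le> z" by (cases x; cases y; cases z) auto
  show "x \<le> y \<Longrightarrow> y \<le> x \<Longrightarrow> x = y" by (cases x; cases y) auto
  show "x \<le> y \<or> y \<le> x" by (cases x; cases y) auto
qed
end

instantiation ext :: (plus) plus
begin
fun plus_ext :: "'a ext \<Rightarrow> 'a ext \<Rightarrow> 'a ext" where
  "plus_ext (Fin x) (Fin y) = Fin (x + y)"
| "plus_ext _ _ = Infty"
instance ..
end

definition ext_Min :: "'g::linorder ext set \<Rightarrow> 'g ext" where
  "ext_Min S = (if S = {} then Infty else Min S)"

definition divisible_group :: "'g::linordered_ab_group_add itself \<Rightarrow> bool" where
  "divisible_group _ \<longleftrightarrow> (\<forall>x::'g. \<forall>n::nat. n > 0 \<longrightarrow> (\<exists>y. (\<Sum>i<n. y) = x))"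

definition valuation :: "('a::field \<Rightarrow> 'g::linordered_ab_group_add ext) \<Rightarrow> bool" where
  "valuation v \<longleftrightarrow>
     (\<forall>x. v x = Infty \<longleftrightarrow> x = 0) \<and>
     (\<forall>x y. v (x * y) = v x + v y) \<and>
     (\<forall>x y. v (x + y) \<ge> min (v x) (v y))"

definition polar :: "('v::ab_group_add \<Rightarrow> 'a::field) \<Rightarrow> 'v \<Rightarrow> 'v \<Rightarrow> 'a" where
  "polar q x y = q (x + y) - q x - q y"

definition quadratic_form :: "('a::field \<Rightarrow> 'v::ab_group_add \<Rightarrow> 'v) \<Rightarrow> ('v \<Rightarrow> 'a) \<Rightarrow> bool" where
  "quadratic_form scale q \<longleftrightarrow>
     (\<forall>c x. q (scale c x) = c * c * q x) \<and>
     (\<forall>x y z. polar q (x + y) z = polar q x z + polar q y z) \<and>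
     (\<forall>c x y. polar q (scale c x) y = c * polar q x y)"

definition vnorm_on ::
  "('a::field \<Rightarrow> 'v::ab_group_add \<Rightarrow> 'v) \<Rightarrow> ('a \<Rightarrow> 'g::linordered_ab_group_add ext)
    \<Rightarrow> 'v set \<Rightarrow> ('v \<Rightarrow> 'g ext) \<Rightarrow> bool" where
  "vnorm_on scale v W \<alpha> \<longleftrightarrow>
     (\<forall>x\<in>W. \<alpha> x = Infty \<longleftrightarrow> x = 0) \<and>
     (\<forall>c. \<forall>x\<in>W. \<alpha> (scale c x) = v c + \<alpha> x) \<and>
     (\<forall>x\<in>W. \<forall>y\<in>W. \<alpha> (x + y) \<ge> min (\<alpha> x) (\<alpha> y)) \<and>
     (\<exists>B. finite B \<and> B \<subseteq> W \<and> \<not> module.dependent scale B \<and> module.span scale B = W \<and>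
        (\<forall>c. \<alpha> (\<Sum>e\<in>B. scale (c e) e) = ext_Min ((\<lambda>e. \<alpha> (scale (c e) e)) ` B)))"

definition compatible_on ::
  "('a::field \<Rightarrow> 'g::linordered_ab_group_add ext) \<Rightarrow> 'g \<Rightarrow> 'v::ab_group_add set
    \<Rightarrow> ('v \<Rightarrow> 'a) \<Rightarrow> ('v \<Rightarrow> 'g ext) \<Rightarrow> bool" where
  "compatible_on v \<epsilon> W q \<alpha> \<longleftrightarrow>
     (\<forall>x\<in>W. \<forall>y\<in>W. v (polar q x y) \<ge> \<alpha> x + \<alpha> y + Fin \<epsilon>) \<and>
     (\<forall>x\<in>W. v (q x) \<ge> \<alpha> x + \<alpha> x) \<and>
     (\<forall>x\<in>W. x \<noteq> 0 \<longrightarrow> (\<exists>y\<in>W. y \<noteq> 0 \<and> v (polar q x y) = \<alpha> x + \<alpha> y + Fin \<epsilon>))"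

end

theory Submission
  imports Defs
begin

(* Call a finite family S splitting if alpha(sum c_e e) = min alpha(c_e e) for all coefficients;
   the v-norm hypothesis provides a splitting basis of V. Pick x in it and, by condition (c), y with
   v(b(x,y)) = alpha(x) + alpha(y) + eps. Since eps < v(2), the value of b(x,x) = 2 q(x) lies strictly
   above the bound of condition (a), and likewise for y; hence in b(ax + cy, y) = a b(x,y) + c b(y,y)
   the first summand dominates when alpha(ax) <= alpha(cy). This gives alpha(ax + cy) =
   min(alpha(ax), alpha(cy)), makes span{x,y} a plane on which alpha is eps-compatible with q, makes
   its Gram determinant nonzero, and shows that alpha(w + u) = min(alpha(w), alpha(u)) whenever w lies
   in the plane and u is orthogonal to it. An exchange argument extends {x,y} by basis vectors to a
   splitting basis {x,y} + G of V; the orthogonal projection onto the complement of the plane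
   preserves alpha on span G, so it maps G to a smaller splitting basis of the complement, which again
   satisfies (c). *)


context vector_space
begin

lemma card_less_card_if_span_neq:
  assumes "finite B" "independent S" "S \<subseteq> span B" "span S \<noteq> span B"
  shows "card S < card B"
proof -
  have "span S \<subseteq> span B"
    using assms(3) by (simp add: span_minimal)
  then obtain b where b: "b \<in> B" "b \<notin> span S"
    using assms(4) span_minimal[of B "span S"] by auto
  have "independent (insert b S)"
    using independent_insertI[OF b(2) assms(2)] .
  moreover have "insert b S \<subseteq> span B"
    using assms(3) b(1) span_base by blast
  ultimately have "card (insert b S) \<le> card B" "finite S"
    using independent_span_bound[OF assms(1)] assms(2,3) by auto
  moreover have "b \<notin> S"
    using b(2) span_base by blast
  ultimately show ?thesis by simp
qed

lemma card_le_card_if_family_independent: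
  assumes "finite B" "finite S" "f ` B \<subseteq> span S"
    and indep: "\<And>c. (\<Sum>e\<in>B. c e *s f e) = 0 \<Longrightarrow> \<forall>e\<in>B. c e = 0"
  shows "card B \<le> card S"
proof -
  have inj: "inj_on f B"
  proof
    fix e1 e2 assume e: "e1 \<in> B" "e2 \<in> B" "f e1 = f e2"
    define c where "c e = (if e = e1 then (1::'a) else if e = e2 then -1 else 0)" for e
    show "e1 = e2"
    proof (rule ccontr)
      assume ne: "e1 \<noteq> e2"
      have "(\<Sum>e\<in>B. c e *s f e) = (\<Sum>e\<in>{e1, e2}. c e *s f e)"
        using e assms(1) by (intro sum.mono_neutral_right) (auto simp: c_def)
      also have "\<dots> = 0"
        using ne e(3) by (simp add: c_def scale_minus_left)
      finally show False
        using indep[of c] e(1) by (auto simp: c_def)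
    qed
  qed
  have "independent (f ` B)"
  proof
    assume "dependent (f ` B)"
    then obtain d w where "w \<in> f ` B" "d w \<noteq> 0" "(\<Sum>u\<in>f ` B. d u *s u) = 0"
      using dependent_finite[of "f ` B"] assms(1) by blast
    then show False
      using indep[of "d \<circ> f"] by (auto simp: sum.reindex[OF inj])
  qed
  then show ?thesis
    using independent_span_bound[OF assms(2) _ assms(3)] card_image[OF inj] by simp
qed

end

lemma cramer_rule_2x2:
  fixes A B C Z1 Z2 :: "'a::field"
  assumes "A * B - C * C \<noteq> 0"
  defines "s \<equiv> (Z1 * B - C * Z2) / (A * B - C * C)"
    and "t \<equiv> (A * Z2 - C * Z1) / (A * B - C * C)"
  shows "s * A + t * C = Z1" "s * C + t * B = Z2"
  using assms by (simp_all add: divide_simps) (simp_all add: algebra_simps)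

lemma ext_le_Infty [simp]: "x \<le> Infty"
  by (cases x) auto

lemma Infty_le_iff [simp]: "Infty \<le> x \<longleftrightarrow> x = Infty"
  by (cases x) auto

lemma less_Infty_iff [simp]: "x < Infty \<longleftrightarrow> x \<noteq> Infty"
  by (cases x) (auto simp: less_ext_def)

lemma ext_add_eq_Infty_iff [simp]: "a + b = Infty \<longleftrightarrow> a = Infty \<or> b = Infty"
  by (cases a; cases b) auto

lemma Fin_zero_add [simp]:
  "Fin (0::'g::linordered_ab_group_add) + a = a" "a + Fin 0 = a"
  by (cases a; simp)+

lemma ext_add_commute: "(a::'g::linordered_ab_group_add ext) + b = b + a"
  by (cases a; cases b) (auto simp: add.commute)

lemma ext_add_assoc: "((a::'g::linordered_ab_group_add ext) + b) + c = a + (b + c)"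
  by (cases a; cases b; cases c) (auto simp: add.assoc)

lemma ext_add_mono:
  "(a::'g::linordered_ab_group_add ext) \<le> b \<Longrightarrow> c \<le> d \<Longrightarrow> a + c \<le> b + d"
  by (cases a; cases b; cases c; cases d) (auto intro: add_mono)

lemma ext_add_strict_mono:
  "(a::'g::linordered_ab_group_add ext) < b \<Longrightarrow> c \<le> d \<Longrightarrow> c \<noteq> Infty \<Longrightarrow> a + c < b + d"
  by (cases a; cases b; cases c; cases d)
    (auto simp: less_ext_def intro: add_mono, metis add_less_le_mono antisym_conv3 not_le)

lemma ext_add_left_less_cancel:
  "c \<noteq> Infty \<Longrightarrow> (c + a < c + (b::'g::linordered_ab_group_add ext)) = (a < b)"
  by (cases a; cases b; cases c) (auto simp: less_ext_def)

lemma ext_add_right_le_cancel: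
  "c \<noteq> Infty \<Longrightarrow> (a + c + Fin e \<le> b + c + Fin e) = ((a::'g::linordered_ab_group_add ext) \<le> b)"
  by (cases a; cases b; cases c) auto

lemma ext_add_min: "(c::'g::linordered_ab_group_add ext) + min a b = min (c + a) (c + b)"
  by (cases a; cases b; cases c) (auto simp: min_def)

lemma ext_Min_empty [simp]: "ext_Min {} = Infty"
  by (simp add: ext_Min_def)

lemma ext_Min_insert: "finite S \<Longrightarrow> ext_Min (insert a S) = min a (ext_Min S)"
  by (simp add: ext_Min_def min_def)

lemma ext_Min_Un: "finite A \<Longrightarrow> finite B \<Longrightarrow> ext_Min (A \<union> B) = min (ext_Min A) (ext_Min B)"
  by (induction A rule: finite_induct) (simp_all add: ext_Min_insert min.assoc)

lemma ext_Min_le: "finite S \<Longrightarrow> s \<in> S \<Longrightarrow> ext_Min S \<le> s"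
  by (auto simp: ext_Min_def)

lemma ext_Min_eq_Infty_iff: "finite S \<Longrightarrow> ext_Min S = Infty \<longleftrightarrow> (\<forall>s\<in>S. s = Infty)"
  by (induction S rule: finite_induct) (auto simp: ext_Min_insert min_def)

lemma less_ext_Min_iff: "finite S \<Longrightarrow> m < ext_Min S \<longleftrightarrow> m \<noteq> Infty \<and> (\<forall>s\<in>S. m < s)"
  by (induction S rule: finite_induct) (auto simp: ext_Min_insert)

section \<open>Quadratic spaces with a compatible norm\<close>

locale compatible_quadratic_space = vector_space scale
  for scale :: "'a::field \<Rightarrow> 'v::ab_group_add \<Rightarrow> 'v" (infixr \<open>*s\<close> 75) +
  fixes v :: "'a \<Rightarrow> 'g::linordered_ab_group_add ext" and q :: "'v \<Rightarrow> 'a"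
    and \<alpha> :: "'v \<Rightarrow> 'g ext" and \<epsilon> :: 'g
  assumes valuation: "valuation v"
    and quadratic_form: "quadratic_form scale q"
    and vnorm: "vnorm_on scale v UNIV \<alpha>"
    and compatible: "compatible_on v \<epsilon> UNIV q \<alpha>"
    and depth_less_v2: "Fin \<epsilon> < v 2"
begin

lemma v_eq_Infty_iff [simp]: "v x = Infty \<longleftrightarrow> x = 0"
  using valuation unfolding valuation_def by blast

lemma v_zero [simp]: "v 0 = Infty"
  by simp

lemma v_mult: "v (x * y) = v x + v y"
  using valuation unfolding valuation_def by blast

lemma v_add_ge: "min (v x) (v y) \<le> v (x + y)"
  using valuation unfolding valuation_def by blast

lemma v_one: "v 1 = Fin 0"
  using v_mult[of 1 1] v_eq_Infty_iff[of 1] by (cases "v 1") auto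

lemma v_minus_one: "v (-1) = Fin 0"
proof -
  obtain t where t: "v (-1) = Fin t"
    using v_eq_Infty_iff[of "-1"] by (cases "v (-1)") auto
  then have "t + t = 0"
    using v_mult[of "-1" "-1"] v_one by simp
  then have "t = 0"
    by (metis add_neg_neg add_pos_pos less_irrefl neq_iff)
  with t show ?thesis by simp
qed

lemma v_uminus [simp]: "v (- x) = v x"
  using v_mult[of "-1" x] v_minus_one by simp

lemma v_add_eq_left: "v a < v c \<Longrightarrow> v (a + c) = v a"
  using v_add_ge[of a c] v_add_ge[of "a + c" "- c"]
  by (auto simp: min_def split: if_splits)

lemma alpha_eq_Infty_iff [simp]: "\<alpha> x = Infty \<longleftrightarrow> x = 0"
  using vnorm unfolding vnorm_on_def by blast

lemma alpha_zero [simp]: "\<alpha> 0 = Infty"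
  by simp

lemma alpha_scale: "\<alpha> (c *s x) = v c + \<alpha> x"
  using vnorm unfolding vnorm_on_def by blast

lemma alpha_add_ge: "min (\<alpha> x) (\<alpha> y) \<le> \<alpha> (x + y)"
  using vnorm unfolding vnorm_on_def by blast

lemma alpha_uminus [simp]: "\<alpha> (- x) = \<alpha> x"
  using alpha_scale[of "-1" x] v_minus_one by (simp add: scale_minus_left)

lemma alpha_add_eq_min: "\<alpha> (x + y) \<le> \<alpha> x \<Longrightarrow> \<alpha> (x + y) = min (\<alpha> x) (\<alpha> y)"
  using alpha_add_ge[of x y] alpha_add_ge[of "x + y" "- x"]
  by (auto simp: min_def split: if_splits)

lemma alpha_sum_ge: "(\<And>i. i \<in> I \<Longrightarrow> m \<le> \<alpha> (f i)) \<Longrightarrow> m \<le> \<alpha> (sum f I)"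
proof (induction I rule: infinite_finite_induct)
  case (insert i I)
  then have "m \<le> min (\<alpha> (f i)) (\<alpha> (sum f I))" by simp
  also have "\<dots> \<le> \<alpha> (f i + sum f I)" by (rule alpha_add_ge)
  finally show ?case using insert by simp
qed simp_all

abbreviation b :: "'v \<Rightarrow> 'v \<Rightarrow> 'a" where
  "b \<equiv> polar q"

lemma polar_commute: "b x y = b y x"
  unfolding polar_def by (simp add: add.commute)

lemma polar_add_left: "b (x + y) z = b x z + b y z"
  using quadratic_form unfolding quadratic_form_def by blast

lemma polar_scale_left: "b (c *s x) y = c * b x y"
  using quadratic_form unfolding quadratic_form_def by blast

lemma polar_add_right: "b z (x + y) = b z x + b z y"
  using polar_add_left polar_commute by metis

lemma polar_scale_right: "b y (c *s x) = c * b y x"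
  using polar_scale_left polar_commute by metis

lemma polar_zero [simp]: "b 0 y = 0" "b y 0 = 0"
  using polar_scale_left[of 0 0 y] polar_scale_right[of y 0 0] by simp_all

lemma polar_diff_left: "b (x - z) y = b x y - b z y"
  using polar_add_left[of "x - z" z y] by (simp add: algebra_simps)

lemma polar_self: "b x x = 2 * q x"
proof -
  have "q (x + x) = 4 * q x"
    using quadratic_form scale_left_distrib[of 1 1 x] unfolding quadratic_form_def
    by (metis mult_2 numeral_Bit0 one_add_one scale_one)
  then show ?thesis unfolding polar_def by simp
qed

lemma v_polar_ge: "\<alpha> x + \<alpha> y + Fin \<epsilon> \<le> v (b x y)"
  using compatible unfolding compatible_on_def by blast

lemma v_q_ge: "\<alpha> x + \<alpha> x \<le> v (q x)"
  using compatible unfolding compatible_on_def by blast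

text \<open>This is where the hypothesis \<open>\<epsilon> < v(2)\<close> enters: it keeps \<open>b(x, x)\<close> from attaining the
  bound of condition (a).\<close>

lemma v_polar_self_greater: "x \<noteq> 0 \<Longrightarrow> \<alpha> x + \<alpha> x + Fin \<epsilon> < v (b x x)"
  using ext_add_strict_mono[OF depth_less_v2 v_q_ge, of x]
  by (simp add: polar_self v_mult ext_add_commute)

end

section \<open>Splitting families\<close>

context compatible_quadratic_space
begin

definition splitting :: "'v set \<Rightarrow> bool" where
  "splitting S \<longleftrightarrow> finite S \<and>
     (\<forall>c. \<alpha> (\<Sum>e\<in>S. c e *s e) = ext_Min ((\<lambda>e. \<alpha> (c e *s e)) ` S))"

lemma splitting_finite: "splitting S \<Longrightarrow> finite S"
  unfolding splitting_def by blast

lemma splittingD: "splitting S \<Longrightarrow> \<alpha> (\<Sum>e\<in>S. c e *s e) = ext_Min ((\<lambda>e. \<alpha> (c e *s e)) ` S)"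
  unfolding splitting_def by blast

lemma splitting_subset:
  assumes "splitting S" "S' \<subseteq> S"
  shows "splitting S'"
  unfolding splitting_def
proof (intro conjI allI)
  have fS: "finite S" using assms(1) splitting_finite by blast
  then show "finite S'" using assms(2) finite_subset by blast
  fix c :: "'v \<Rightarrow> 'a"
  define c' where "c' e = (if e \<in> S' then c e else 0)" for e
  have "(\<Sum>e\<in>S. c' e *s e) = (\<Sum>e\<in>S'. c e *s e)"
    by (intro sum.mono_neutral_cong_right[OF fS assms(2)]) (auto simp: c'_def)
  moreover have "(\<lambda>e. \<alpha> (c' e *s e)) ` S =
      (\<lambda>e. \<alpha> (c e *s e)) ` S' \<union> (\<lambda>e. \<alpha> (c' e *s e)) ` (S - S')"
    using assms(2) by (force simp: c'_def)
  moreover have "ext_Min ((\<lambda>e. \<alpha> (c' e *s e)) ` (S - S')) = Infty"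
    using fS by (simp add: ext_Min_eq_Infty_iff c'_def)
  ultimately show "\<alpha> (\<Sum>e\<in>S'. c e *s e) = ext_Min ((\<lambda>e. \<alpha> (c e *s e)) ` S')"
    using splittingD[OF assms(1), of c'] fS \<open>finite S'\<close> by (simp add: ext_Min_Un)
qed

lemma splitting_independent:
  assumes "splitting S" "0 \<notin> S"
  shows "independent S"
proof
  assume "dependent S"
  then obtain c e where ce: "e \<in> S" "c e \<noteq> 0" "(\<Sum>u\<in>S. c u *s u) = 0"
    using dependent_finite[OF splitting_finite[OF assms(1)]] by blast
  then have "ext_Min ((\<lambda>e. \<alpha> (c e *s e)) ` S) = Infty"
    using splittingD[OF assms(1), of c] by simp
  then show False
    using ce assms(2) splitting_finite[OF assms(1)] by (auto simp: ext_Min_eq_Infty_iff alpha_scale)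
qed

lemma splitting_Un_alpha_add:
  assumes "splitting (S \<union> T)" "S \<inter> T = {}" "x \<in> span S" "y \<in> span T"
  shows "\<alpha> (x + y) = min (\<alpha> x) (\<alpha> y)"
proof -
  have fS: "finite S" and fT: "finite T"
    using splitting_finite[OF assms(1)] by auto
  obtain c d where x: "x = (\<Sum>e\<in>S. c e *s e)" and y: "y = (\<Sum>e\<in>T. d e *s e)"
    using assms(3,4) span_finite[OF fS] span_finite[OF fT] by auto
  define cd where "cd e = (if e \<in> S then c e else d e)" for e
  have "x + y = (\<Sum>e\<in>S \<union> T. cd e *s e)"
    unfolding sum.union_disjoint[OF fS fT assms(2)] x y cd_def using assms(2)
    by (auto intro!: arg_cong2[where f="(+)"] sum.cong)
  moreover have "(\<lambda>e. \<alpha> (cd e *s e)) ` (S \<union> T) =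
      (\<lambda>e. \<alpha> (c e *s e)) ` S \<union> (\<lambda>e. \<alpha> (d e *s e)) ` T"
    using assms(2) by (force simp: cd_def)
  ultimately show ?thesis
    using splittingD[OF assms(1), of cd] splittingD[OF splitting_subset[OF assms(1)]] fS fT
    by (simp add: ext_Min_Un x y)
qed

lemma splitting_insert:
  assumes "splitting S" "e \<notin> S" and minimal: "\<forall>s\<in>span S. \<alpha> (e + s) \<le> \<alpha> e"
  shows "splitting (insert e S)"
  unfolding splitting_def
proof (intro conjI allI)
  have fS: "finite S" using assms(1) splitting_finite by blast
  then show "finite (insert e S)" by simp
  fix c
  let ?s = "\<Sum>u\<in>S. c u *s u"
  have "\<alpha> (c e *s e + ?s) = min (\<alpha> (c e *s e)) (\<alpha> ?s)"
  proof (cases "c e = 0")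
    case False
    define s where "s = inverse (c e) *s ?s"
    have s: "?s = c e *s s" using False by (simp add: s_def)
    have "s \<in> span S"
      unfolding s_def by (intro span_scale span_sum span_base)
    then have "\<alpha> (e + s) = min (\<alpha> e) (\<alpha> s)"
      using minimal by (intro alpha_add_eq_min) blast
    then show ?thesis
      by (simp add: s alpha_scale ext_add_min flip: scale_right_distrib)
  qed simp
  then show "\<alpha> (\<Sum>u\<in>insert e S. c u *s u) = ext_Min ((\<lambda>u. \<alpha> (c u *s u)) ` insert e S)"
    using splittingD[OF assms(1), of c] fS assms(2) by (simp add: ext_Min_insert)
qed

end

context compatible_quadratic_space
begin

text \<open>If \<open>\<Sum> c\<^sub>e f\<^sub>e = 0\<close>, then \<open>\<Sum> c\<^sub>e e = \<Sum> c\<^sub>e (e + f\<^sub>e)\<close> would be longer than its splitting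
  expansion allows unless all \<open>c\<^sub>e\<close> vanish.\<close>

lemma splitting_perturbation_independent:
  assumes B: "splitting B" "0 \<notin> B"
    and longer: "\<And>e. e \<in> B \<Longrightarrow> \<alpha> e < \<alpha> (e + f e)"
    and zero: "(\<Sum>e\<in>B. c e *s f e) = 0"
  shows "\<forall>e\<in>B. c e = 0"
proof -
  have fB: "finite B" using splitting_finite[OF B(1)] .
  define u where "u = (\<Sum>e\<in>B. c e *s e)"
  have u: "u = (\<Sum>e\<in>B. c e *s (e + f e))"
    using zero by (simp add: u_def scale_right_distrib sum.distrib)
  have "u = 0"
  proof (rule ccontr)
    assume "u \<noteq> 0"
    then have "\<alpha> u < ext_Min ((\<lambda>e. \<alpha> (c e *s (e + f e))) ` B)"
    proof (subst less_ext_Min_iff[OF finite_imageI[OF fB]], intro conjI ballI)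
      fix s assume "s \<in> (\<lambda>e. \<alpha> (c e *s (e + f e))) ` B"
      then obtain e where e: "e \<in> B" "s = \<alpha> (c e *s (e + f e))" by blast
      have "\<alpha> u \<le> v (c e) + \<alpha> e"
        using ext_Min_le[OF finite_imageI[OF fB]] e(1) splittingD[OF B(1), of c]
        by (fastforce simp: u_def alpha_scale)
      also have "\<dots> < v (c e) + \<alpha> (e + f e)" if "c e \<noteq> 0"
        using longer[OF e(1)] that by (simp add: ext_add_left_less_cancel)
      finally show "\<alpha> u < s"
        using e \<open>u \<noteq> 0\<close> by (cases "c e = 0") (simp_all add: alpha_scale)
    qed (simp add: \<open>u \<noteq> 0\<close>)
    also have "\<dots> \<le> \<alpha> u"
      unfolding u using fB by (intro alpha_sum_ge ext_Min_le) auto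
    finally show False by simp
  qed
  then show ?thesis
    using splitting_independent[OF B] dependent_finite[OF fB] unfolding u_def by blast
qed

text \<open>Otherwise every \<open>e \<in> B\<close> could be lengthened by some \<open>f e \<in> span S\<close>, and the \<open>f e\<close>
  would give \<open>card B\<close> independent vectors in \<open>span S\<close>.\<close>

lemma splitting_extend_step:
  assumes B: "splitting B" "0 \<notin> B" and S: "splitting S" "0 \<notin> S"
    and "S \<subseteq> span B" "span S \<noteq> span B"
  shows "\<exists>e\<in>B. e \<notin> S \<and> splitting (insert e S)"
proof (rule ccontr)
  assume "\<not> ?thesis"
  then have "\<exists>s\<in>span S. \<alpha> e < \<alpha> (e + s)" if "e \<in> B" for e
    using splitting_insert[OF S(1)] B(2) that span_neg[OF span_base, of e S]
    by (cases "e \<in> S") (force simp: not_le)+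
  then obtain f where f: "\<And>e. e \<in> B \<Longrightarrow> f e \<in> span S \<and> \<alpha> e < \<alpha> (e + f e)"
    by metis
  have "card B \<le> card S"
    using splitting_finite[OF B(1)] splitting_finite[OF S(1)] f
      splitting_perturbation_independent[OF B, of f]
    by (intro card_le_card_if_family_independent) auto
  moreover have "card S < card B"
    using card_less_card_if_span_neq[OF splitting_finite[OF B(1)] splitting_independent[OF S]] assms(5,6) .
  ultimately show False by simp
qed

lemma splitting_extend:
  assumes B: "splitting B" "0 \<notin> B"
  shows "splitting T \<Longrightarrow> 0 \<notin> T \<Longrightarrow> T \<subseteq> span B \<Longrightarrow>
    \<exists>G\<subseteq>B. T \<inter> G = {} \<and> splitting (T \<union> G) \<and> span (T \<union> G) = span B"
proof (induction "card B - card T" arbitrary: T rule: less_induct)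
  case less
  show ?case
  proof (cases "span T = span B")
    case True
    then show ?thesis using less.prems by auto
  next
    case False
    obtain e where e: "e \<in> B" "e \<notin> T" "splitting (insert e T)"
      using splitting_extend_step[OF B less.prems(1,2,3) False] by blast
    have "card T < card B"
      using card_less_card_if_span_neq[OF splitting_finite[OF B(1)]
          splitting_independent[OF less.prems(1,2)] less.prems(3) False] .
    then have "card B - card (insert e T) < card B - card T"
      using e(2) splitting_finite[OF less.prems(1)] by simp
    moreover have "insert e T \<subseteq> span B"
      using e(1) less.prems(3) span_base by blast
    ultimately obtain G where "G \<subseteq> B" "insert e T \<inter> G = {}"
        "splitting (insert e T \<union> G)" "span (insert e T \<union> G) = span B"
      using less.hyps[of "insert e T"] e(3) less.prems(2) B(2) e(1) by blast
    then show ?thesis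
      using e(1,2) by (intro exI[of _ "insert e G"]) auto
  qed
qed

end

context compatible_quadratic_space
begin

lemma splitting_isometric_image:
  assumes "Vector_Spaces.linear scale scale L" "splitting G" and iso: "\<And>u. u \<in> span G \<Longrightarrow> \<alpha> (L u) = \<alpha> u"
  shows "splitting (L ` G)" "inj_on L G" "0 \<notin> G \<Longrightarrow> 0 \<notin> L ` G"
proof -
  interpret L: Vector_Spaces.linear scale scale L by fact
  show inj: "inj_on L G"
  proof
    fix g h assume "g \<in> G" "h \<in> G" "L g = L h"
    then have "\<alpha> (g - h) = Infty"
      using iso[of "g - h"] by (simp add: L.diff span_diff span_base)
    then show "g = h" by simp
  qed
  show "0 \<notin> G \<Longrightarrow> 0 \<notin> L ` G"
    using iso span_base by (metis alpha_eq_Infty_iff image_iff)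
  show "splitting (L ` G)"
    unfolding splitting_def
  proof (intro conjI allI)
    show "finite (L ` G)" using splitting_finite[OF assms(2)] by simp
    fix c :: "'v \<Rightarrow> 'a"
    let ?u = "\<Sum>g\<in>G. c (L g) *s g"
    have "(\<Sum>e\<in>L ` G. c e *s e) = L ?u"
      by (simp add: sum.reindex[OF inj] L.sum L.scale)
    moreover have "\<alpha> (L ?u) = \<alpha> ?u"
      by (intro iso span_sum span_scale span_base)
    moreover have "(\<lambda>e. \<alpha> (c e *s e)) ` L ` G = (\<lambda>g. \<alpha> (c (L g) *s g)) ` G"
      unfolding image_image
      using iso[OF span_scale[OF span_base]] by (auto simp: L.scale[symmetric] cong: image_cong)
    ultimately show "\<alpha> (\<Sum>e\<in>L ` G. c e *s e) = ext_Min ((\<lambda>e. \<alpha> (c e *s e)) ` L ` G)"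
      using splittingD[OF assms(2)] by simp
  qed
qed

end

section \<open>The plane of a compatible pair\<close>

locale compatible_pair = compatible_quadratic_space scale v q \<alpha> \<epsilon>
  for scale :: "'a::field \<Rightarrow> 'v::ab_group_add \<Rightarrow> 'v" (infixr \<open>*s\<close> 75)
    and v :: "'a \<Rightarrow> 'g::linordered_ab_group_add ext" and q and \<alpha> and \<epsilon> +
  fixes x y :: 'v
  assumes x_nonzero: "x \<noteq> 0" and y_nonzero: "y \<noteq> 0"
    and v_polar_xy: "v (b x y) = \<alpha> x + \<alpha> y + Fin \<epsilon>"
begin

lemma compatible_pair_swap: "compatible_pair scale v q \<alpha> \<epsilon> y x"
  using compatible_quadratic_space_axioms x_nonzero y_nonzero v_polar_xy
  unfolding compatible_pair_def compatible_pair_axioms_def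
  by (simp add: polar_commute[of y x] ext_add_commute[of "\<alpha> y"])

lemma x_neq_y: "x \<noteq> y"
  using v_polar_self_greater[OF x_nonzero] v_polar_xy by auto

text \<open>In \<open>b(a x + c y, y) = a b(x, y) + c b(y, y)\<close> the first summand has strictly smaller value.\<close>

lemma v_polar_lincomb:
  assumes le: "\<alpha> (a *s x) \<le> \<alpha> (c *s y)"
  shows "v (b (a *s x + c *s y) y) = \<alpha> (a *s x) + \<alpha> y + Fin \<epsilon>"
proof (cases "a = 0")
  case True
  then show ?thesis using le y_nonzero by (simp add: alpha_scale)
next
  case False
  have M: "v (a * b x y) = \<alpha> (a *s x) + \<alpha> y + Fin \<epsilon>"
    by (simp add: v_mult v_polar_xy alpha_scale ext_add_assoc)
  have "v (a * b x y) < v (c * b y y)"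
  proof (cases "c = 0")
    case True
    then show ?thesis using M False x_nonzero y_nonzero by (simp add: alpha_scale)
  next
    case False
    have "v (a * b x y) \<le> v c + (\<alpha> y + \<alpha> y + Fin \<epsilon>)"
      unfolding M using ext_add_mono[OF ext_add_mono[OF le order_refl] order_refl]
      by (simp add: alpha_scale ext_add_assoc)
    also have "\<dots> < v c + v (b y y)"
      using v_polar_self_greater[OF y_nonzero] False by (simp add: ext_add_left_less_cancel)
    finally show ?thesis by (simp add: v_mult)
  qed
  then show ?thesis
    using M v_add_eq_left by (simp add: polar_add_left polar_scale_left)
qed

lemma lincomb_x_le_y:
  assumes "\<alpha> (a *s x) \<le> \<alpha> (c *s y)"
  shows "\<alpha> (a *s x + c *s y) = \<alpha> (a *s x)"
    and "v (b (a *s x + c *s y) y) = \<alpha> (a *s x + c *s y) + \<alpha> y + Fin \<epsilon>"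
proof -
  have "\<alpha> (a *s x + c *s y) + \<alpha> y + Fin \<epsilon> \<le> \<alpha> (a *s x) + \<alpha> y + Fin \<epsilon>"
    using v_polar_ge[of "a *s x + c *s y" y] v_polar_lincomb[OF assms] by simp
  then have "\<alpha> (a *s x + c *s y) \<le> \<alpha> (a *s x)"
    using ext_add_right_le_cancel[of "\<alpha> y"] y_nonzero by simp
  then show "\<alpha> (a *s x + c *s y) = \<alpha> (a *s x)"
    using alpha_add_eq_min[of "a *s x" "c *s y"] assms by (simp add: min_absorb1)
  then show "v (b (a *s x + c *s y) y) = \<alpha> (a *s x + c *s y) + \<alpha> y + Fin \<epsilon>"
    using v_polar_lincomb[OF assms] by simp
qed

lemma lincomb_y_le_x:
  assumes "\<alpha> (c *s y) \<le> \<alpha> (a *s x)"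
  shows "\<alpha> (a *s x + c *s y) = \<alpha> (c *s y)"
    and "v (b (a *s x + c *s y) x) = \<alpha> (a *s x + c *s y) + \<alpha> x + Fin \<epsilon>"
  using compatible_pair.lincomb_x_le_y[OF compatible_pair_swap assms] by (simp_all add: add.commute)

lemma alpha_lincomb: "\<alpha> (a *s x + c *s y) = min (\<alpha> (a *s x)) (\<alpha> (c *s y))"
  using lincomb_x_le_y(1) lincomb_y_le_x(1) by (cases "\<alpha> (a *s x) \<le> \<alpha> (c *s y)") auto

lemma span_pairE:
  assumes "w \<in> span {x, y}"
  obtains a c where "w = a *s x + c *s y"
  using assms span_finite[of "{x, y}"] x_neq_y by auto

lemma polar_witness:
  assumes "w \<in> span {x, y}"
  shows "\<exists>z\<in>{x, y}. v (b w z) = \<alpha> w + \<alpha> z + Fin \<epsilon>"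
  using assms lincomb_x_le_y(2) lincomb_y_le_x(2) by (elim span_pairE) (meson insertI1 insertI2 linear)

lemma alpha_add_orthogonal:
  assumes "w \<in> span {x, y}" "b u x = 0" "b u y = 0"
  shows "\<alpha> (w + u) = min (\<alpha> w) (\<alpha> u)"
proof (rule alpha_add_eq_min)
  obtain z where z: "z \<in> {x, y}" "v (b w z) = \<alpha> w + \<alpha> z + Fin \<epsilon>"
    using polar_witness[OF assms(1)] by blast
  have "\<alpha> (w + u) + \<alpha> z + Fin \<epsilon> \<le> \<alpha> w + \<alpha> z + Fin \<epsilon>"
    using v_polar_ge[of "w + u" z] z assms(2,3) by (auto simp: polar_add_left)
  then show "\<alpha> (w + u) \<le> \<alpha> w"
    using ext_add_right_le_cancel[of "\<alpha> z"] z(1) x_nonzero y_nonzero by auto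
qed

lemma splitting_pair: "splitting {x, y}"
  unfolding splitting_def using x_neq_y alpha_lincomb by (simp add: ext_Min_insert)

lemma independent_pair: "independent {x, y}"
  using splitting_independent[OF splitting_pair] x_nonzero y_nonzero by auto

lemma dim_span_pair: "dim (span {x, y}) = 2"
  using dim_span_eq_card_independent[OF independent_pair] x_neq_y by simp

lemma vnorm_on_span_pair: "vnorm_on scale v (span {x, y}) \<alpha>"
  unfolding vnorm_on_def
  using independent_pair splittingD[OF splitting_pair]
  by (auto simp: alpha_scale alpha_add_ge span_base intro!: exI[of _ "{x, y}"])

lemma compatible_on_span_pair: "compatible_on v \<epsilon> (span {x, y}) q \<alpha>"
  unfolding compatible_on_def
  using v_polar_ge v_q_ge polar_witness x_nonzero y_nonzero span_base[of _ "{x, y}"]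
  by (metis insert_iff singletonD)

end

context compatible_pair
begin

definition gram :: 'a where
  "gram = b x x * b y y - b x y * b x y"

text \<open>Because \<open>v(b(x, x)) + v(b(y, y)) > 2 v(b(x, y))\<close>.\<close>

lemma gram_nonzero: "gram \<noteq> 0"
proof
  assume "gram = 0"
  then have "v (b x x) + v (b y y) = v (b x y) + v (b x y)"
    unfolding gram_def by (simp flip: v_mult)
  moreover have "v (b x y) + v (b x y) < v (b x x) + v (b y y)"
    using ext_add_strict_mono[OF v_polar_self_greater[OF x_nonzero] less_imp_le,
        OF v_polar_self_greater[OF y_nonzero]] x_nonzero y_nonzero
    by (cases "\<alpha> x"; cases "\<alpha> y") (auto simp: v_polar_xy algebra_simps)
  ultimately show False by simp
qed

text \<open>\<open>coeff_x z\<close>, \<open>coeff_y z\<close> solve the Gram system \<open>b(z, x) = s b(x, x) + t b(y, x)\<close>,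
  \<open>b(z, y) = s b(x, y) + t b(y, y)\<close> by Cramer's rule, so \<open>proj\<close> projects orthogonally onto the
  complement of \<open>span {x, y}\<close>.\<close>

definition coeff_x :: "'v \<Rightarrow> 'a" where
  "coeff_x z = (b z x * b y y - b x y * b z y) / gram"

definition coeff_y :: "'v \<Rightarrow> 'a" where
  "coeff_y z = (b x x * b z y - b x y * b z x) / gram"

definition proj :: "'v \<Rightarrow> 'v" where
  "proj z = z - (coeff_x z *s x + coeff_y z *s y)"

lemma polar_proj: "b (proj z) x = 0" "b (proj z) y = 0"
proof -
  have "b (proj z) x = b z x - (coeff_x z * b x x + coeff_y z * b x y)"
    "b (proj z) y = b z y - (coeff_x z * b x y + coeff_y z * b y y)"
    by (simp_all add: proj_def polar_diff_left polar_add_left polar_scale_left polar_commute[of y x])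
  then show "b (proj z) x = 0" "b (proj z) y = 0"
    using cramer_rule_2x2[OF gram_nonzero[unfolded gram_def], of "b z x" "b z y"]
    by (simp_all add: coeff_x_def coeff_y_def gram_def)
qed

lemma linear_proj: "Vector_Spaces.linear scale scale proj"
proof -
  have "coeff_x (z + w) = coeff_x z + coeff_x w" "coeff_y (z + w) = coeff_y z + coeff_y w" for z w
    unfolding coeff_x_def coeff_y_def
    by (simp_all add: polar_add_left add_divide_distrib[symmetric] algebra_simps)
  then have "proj (z + w) = proj z + proj w" for z w
    by (simp add: proj_def scale_left_distrib algebra_simps)
  have "coeff_x (c *s z) = c * coeff_x z" "coeff_y (c *s z) = c * coeff_y z" for z c
    unfolding coeff_x_def coeff_y_def
    by (simp_all add: polar_scale_left algebra_simps times_divide_eq_right)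
  then have "proj (c *s z) = c *s proj z" for z c
    by (simp add: proj_def scale_right_diff_distrib scale_right_distrib)
  show ?thesis
    unfolding Vector_Spaces.linear_iff using \<open>\<And>z w. proj (z + w) = proj z + proj w\<close> \<open>\<And>z c. proj (c *s z) = c *s proj z\<close>
    by (simp add: vector_space_axioms)
qed

interpretation proj: Vector_Spaces.linear scale scale proj
  by (rule linear_proj)

lemma proj_eq_self: "b z x = 0 \<Longrightarrow> b z y = 0 \<Longrightarrow> proj z = z"
  by (simp add: proj_def coeff_x_def coeff_y_def)

lemma proj_span_pair: "w \<in> span {x, y} \<Longrightarrow> proj w = 0"
proof -
  have "proj x = 0" "proj y = 0"
    using gram_nonzero
    by (simp_all add: proj_def coeff_x_def coeff_y_def gram_def polar_commute[of y x] algebra_simps)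
  then show "w \<in> span {x, y} \<Longrightarrow> proj w = 0"
    by (elim span_pairE) (simp add: proj.add proj.scale)
qed

lemma diff_proj_in_span_pair: "z - proj z \<in> span {x, y}"
  by (simp add: proj_def span_add span_scale span_base)

definition orth_compl :: "'v set \<Rightarrow> 'v set" where
  "orth_compl U = {z \<in> U. b z x = 0 \<and> b z y = 0}"

lemma subspace_orth_compl: "subspace U \<Longrightarrow> subspace (orth_compl U)"
  unfolding orth_compl_def
  by (rule subspaceI) (auto simp: subspace_0 subspace_add subspace_scale polar_add_left polar_scale_left)

lemma proj_in_orth_compl:
  assumes "subspace U" "x \<in> U" "y \<in> U" "z \<in> U"
  shows "proj z \<in> orth_compl U"
proof -
  have "span {x, y} \<subseteq> U" using assms by (simp add: span_minimal)
  then have "z - (z - proj z) \<in> U"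
    using diff_proj_in_span_pair assms(1,4) subspace_diff by blast
  then show ?thesis unfolding orth_compl_def using polar_proj by simp
qed

lemma orth_compl_orthogonal: "u \<in> orth_compl U \<Longrightarrow> w \<in> span {x, y} \<Longrightarrow> b u w = 0"
  unfolding orth_compl_def by (elim span_pairE) (simp add: polar_add_right polar_scale_right)

text \<open>\<open>u - proj u\<close> lies in \<open>span {x, y}\<close>, which is \<open>\<alpha>\<close>-orthogonal both to \<open>span G\<close> (by splitting)
  and to \<open>proj u\<close> (by \<open>alpha_add_orthogonal\<close>).\<close>

lemma alpha_proj:
  assumes "splitting ({x, y} \<union> G)" "{x, y} \<inter> G = {}" "u \<in> span G"
  shows "\<alpha> (proj u) = \<alpha> u"
proof (rule antisym)
  have "\<alpha> (proj u) = min (\<alpha> (proj u - u)) (\<alpha> u)"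
    using splitting_Un_alpha_add[OF assms(1,2) span_neg[OF diff_proj_in_span_pair[of u]] assms(3)]
    by simp
  then show "\<alpha> (proj u) \<le> \<alpha> u" by simp
  have "\<alpha> u = min (\<alpha> (u - proj u)) (\<alpha> (proj u))"
    using alpha_add_orthogonal[OF diff_proj_in_span_pair[of u] polar_proj[of u]] by simp
  then show "\<alpha> u \<le> \<alpha> (proj u)" by simp
qed

lemma span_proj_image:
  assumes "finite G"
  shows "span (proj ` G) = orth_compl (span ({x, y} \<union> G))"
proof
  show "span (proj ` G) \<subseteq> orth_compl (span ({x, y} \<union> G))"
    using proj_in_orth_compl[OF subspace_span] span_base span_minimal subspace_orth_compl subspace_span
    by (metis (no_types, lifting) UnCI image_subsetI insertCI)
next
  show "orth_compl (span ({x, y} \<union> G)) \<subseteq> span (proj ` G)"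
  proof
    fix z assume z: "z \<in> orth_compl (span ({x, y} \<union> G))"
    then obtain t u where "z = t + u" "t \<in> span {x, y}" "u \<in> span G"
      unfolding orth_compl_def span_Un by blast
    then have "z = proj u"
      using z proj_eq_self[of z] proj_span_pair by (auto simp: orth_compl_def proj.add)
    then show "z \<in> span (proj ` G)"
      using \<open>u \<in> span G\<close> proj.span_image by auto
  qed
qed

end

section \<open>Orthogonal decompositions\<close>

context compatible_quadratic_space
begin

definition nondegenerate :: "'v set \<Rightarrow> bool" where
  "nondegenerate U \<longleftrightarrow> (\<forall>z\<in>U. z \<noteq> 0 \<longrightarrow> (\<exists>w\<in>U. w \<noteq> 0 \<and> v (b z w) = \<alpha> z + \<alpha> w + Fin \<epsilon>))"

definition orthogonal_decomposition :: "'v set \<Rightarrow> nat \<Rightarrow> (nat \<Rightarrow> 'v set) \<Rightarrow> bool" where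
  "orthogonal_decomposition U n Vs \<longleftrightarrow>
     (\<forall>i<n. subspace (Vs i) \<and> dim (Vs i) = 2 \<and> Vs i \<subseteq> U \<and>
        vnorm_on scale v (Vs i) \<alpha> \<and> compatible_on v \<epsilon> (Vs i) q \<alpha>) \<and>
     (\<forall>z\<in>U. \<exists>xs. (\<forall>i<n. xs i \<in> Vs i) \<and> z = (\<Sum>i<n. xs i)) \<and>
     (\<forall>i<n. \<forall>j<n. i \<noteq> j \<longrightarrow> (\<forall>s\<in>Vs i. \<forall>t\<in>Vs j. b s t = 0)) \<and>
     (\<forall>xs. (\<forall>i<n. xs i \<in> Vs i) \<longrightarrow> \<alpha> (\<Sum>i<n. xs i) = ext_Min ((\<lambda>i. \<alpha> (xs i)) ` {..<n}))"

lemma orthogonal_decomposition_empty: "orthogonal_decomposition (span {}) 0 Vs"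
  by (simp add: orthogonal_decomposition_def)

lemma orthogonal_decomposition_sum_eq_zero:
  assumes "orthogonal_decomposition U n Vs" "\<forall>i<n. xs i \<in> Vs i" "(\<Sum>i<n. xs i) = 0"
  shows "\<forall>i<n. xs i = 0"
proof -
  have "ext_Min ((\<lambda>i. \<alpha> (xs i)) ` {..<n}) = Infty"
    using assms unfolding orthogonal_decomposition_def by (metis alpha_zero)
  then show ?thesis by (simp add: ext_Min_eq_Infty_iff)
qed

lemma orthogonal_decomposition_Suc:
  assumes dec: "orthogonal_decomposition U' n Vs"
    and W: "subspace W" "dim W = 2" "W \<subseteq> U" "vnorm_on scale v W \<alpha>" "compatible_on v \<epsilon> W q \<alpha>"
    and U': "subspace U'" "U' \<subseteq> U"
    and spanning: "\<forall>z\<in>U. \<exists>w\<in>W. z - w \<in> U'"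
    and orth: "\<forall>w\<in>W. \<forall>u\<in>U'. b w u = 0"
    and alpha: "\<forall>w\<in>W. \<forall>u\<in>U'. \<alpha> (w + u) = min (\<alpha> w) (\<alpha> u)"
  shows "orthogonal_decomposition U (Suc n) (Vs(n := W))"
proof -
  let ?Vs = "Vs(n := W)"
  have Vs: "\<forall>i<n. subspace (Vs i) \<and> dim (Vs i) = 2 \<and> Vs i \<subseteq> U' \<and>
        vnorm_on scale v (Vs i) \<alpha> \<and> compatible_on v \<epsilon> (Vs i) q \<alpha>"
    and spanning': "\<forall>z\<in>U'. \<exists>xs. (\<forall>i<n. xs i \<in> Vs i) \<and> z = (\<Sum>i<n. xs i)"
    and orth': "\<forall>i<n. \<forall>j<n. i \<noteq> j \<longrightarrow> (\<forall>s\<in>Vs i. \<forall>t\<in>Vs j. b s t = 0)"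
    and alpha': "\<forall>xs. (\<forall>i<n. xs i \<in> Vs i) \<longrightarrow> \<alpha> (\<Sum>i<n. xs i) = ext_Min ((\<lambda>i. \<alpha> (xs i)) ` {..<n})"
    using dec unfolding orthogonal_decomposition_def by blast+
  have parts: "(\<forall>i<Suc n. xs i \<in> ?Vs i) \<longleftrightarrow> (\<forall>i<n. xs i \<in> Vs i) \<and> xs n \<in> W" for xs
    by (auto simp: less_Suc_eq)
  show ?thesis
    unfolding orthogonal_decomposition_def
  proof (intro conjI)
    show "\<forall>i<Suc n. subspace (?Vs i) \<and> dim (?Vs i) = 2 \<and> ?Vs i \<subseteq> U \<and>
        vnorm_on scale v (?Vs i) \<alpha> \<and> compatible_on v \<epsilon> (?Vs i) q \<alpha>"
      using Vs W U'(2) by (auto simp: less_Suc_eq)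
    show "\<forall>z\<in>U. \<exists>xs. (\<forall>i<Suc n. xs i \<in> ?Vs i) \<and> z = (\<Sum>i<Suc n. xs i)"
    proof
      fix z assume "z \<in> U"
      then obtain w xs where "w \<in> W" "\<forall>i<n. xs i \<in> Vs i" "z - w = (\<Sum>i<n. xs i)"
        using spanning spanning' by metis
      then have "\<forall>i<Suc n. (xs(n := w)) i \<in> ?Vs i" "z = (\<Sum>i<Suc n. (xs(n := w)) i)"
        by (auto simp: less_Suc_eq algebra_simps)
      then show "\<exists>xs. (\<forall>i<Suc n. xs i \<in> ?Vs i) \<and> z = (\<Sum>i<Suc n. xs i)" by blast
    qed
    show "\<forall>i<Suc n. \<forall>j<Suc n. i \<noteq> j \<longrightarrow> (\<forall>s\<in>?Vs i. \<forall>t\<in>?Vs j. b s t = 0)"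
      using orth orth' Vs polar_commute by (auto simp: less_Suc_eq) (metis subsetD)+
    show "\<forall>xs. (\<forall>i<Suc n. xs i \<in> ?Vs i) \<longrightarrow>
        \<alpha> (\<Sum>i<Suc n. xs i) = ext_Min ((\<lambda>i. \<alpha> (xs i)) ` {..<Suc n})"
    proof (intro allI impI)
      fix xs assume "\<forall>i<Suc n. xs i \<in> ?Vs i"
      then have xs: "\<forall>i<n. xs i \<in> Vs i" "xs n \<in> W" using parts by blast+
      then have "(\<Sum>i<n. xs i) \<in> U'"
        using Vs by (intro subspace_sum[OF U'(1)]) auto
      then have "\<alpha> (xs n + (\<Sum>i<n. xs i)) = min (\<alpha> (xs n)) (\<alpha> (\<Sum>i<n. xs i))"
        using alpha xs(2) by blast
      then show "\<alpha> (\<Sum>i<Suc n. xs i) = ext_Min ((\<lambda>i. \<alpha> (xs i)) ` {..<Suc n})"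
        using alpha' xs(1) by (simp add: lessThan_Suc ext_Min_insert add.commute)
    qed
  qed
qed

end

context compatible_pair
begin

lemma nondegenerate_orth_compl:
  assumes U: "subspace U" "x \<in> U" "y \<in> U" and nondeg: "nondegenerate U"
  shows "nondegenerate (orth_compl U)"
  unfolding nondegenerate_def
proof (intro ballI impI)
  fix z assume z: "z \<in> orth_compl U" "z \<noteq> 0"
  then obtain w where w: "w \<in> U" "v (b z w) = \<alpha> z + \<alpha> w + Fin \<epsilon>" "w \<noteq> 0"
    using nondeg unfolding nondegenerate_def orth_compl_def by blast
  define u where "u = proj w"
  have u: "u \<in> orth_compl U"
    unfolding u_def using proj_in_orth_compl[OF U w(1)] .
  have "b z w = b z u"
    using orth_compl_orthogonal[OF z(1) diff_proj_in_span_pair[of w]]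
    by (simp add: u_def polar_add_right[of z "w - proj w" "proj w", simplified])
  moreover have "\<alpha> w \<le> \<alpha> u"
    using alpha_add_orthogonal[OF diff_proj_in_span_pair[of w] polar_proj[of w]] by (simp add: u_def)
  ultimately have "v (b z u) \<le> \<alpha> z + \<alpha> u + Fin \<epsilon>"
    using w(2) ext_add_mono[OF ext_add_mono[OF order_refl] order_refl] by metis
  then have "v (b z u) = \<alpha> z + \<alpha> u + Fin \<epsilon>"
    using v_polar_ge[of z u] by simp
  moreover have "u \<noteq> 0"
    using \<open>b z w = b z u\<close> w(2,3) z(2) by (auto simp: eq_commute[of Infty])
  ultimately show "\<exists>w\<in>orth_compl U. w \<noteq> 0 \<and> v (b z w) = \<alpha> z + \<alpha> w + Fin \<epsilon>"
    using u by blast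
qed

lemma orthogonal_decomposition_extend:
  assumes U: "subspace U" "x \<in> U" "y \<in> U"
    and dec: "orthogonal_decomposition (orth_compl U) n Vs"
  shows "orthogonal_decomposition U (Suc n) (Vs(n := span {x, y}))"
proof (rule orthogonal_decomposition_Suc[OF dec subspace_span dim_span_pair _ vnorm_on_span_pair
      compatible_on_span_pair subspace_orth_compl[OF U(1)]])
  show "span {x, y} \<subseteq> U" using U by (simp add: span_minimal)
  show "orth_compl U \<subseteq> U" unfolding orth_compl_def by blast
  show "\<forall>z\<in>U. \<exists>w\<in>span {x, y}. z - w \<in> orth_compl U"
  proof
    fix z assume "z \<in> U"
    show "\<exists>w\<in>span {x, y}. z - w \<in> orth_compl U"
    proof
      show "z - (z - proj z) \<in> orth_compl U"
        using proj_in_orth_compl[OF U \<open>z \<in> U\<close>] by simp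
    qed (rule diff_proj_in_span_pair)
  qed
  show "\<forall>w\<in>span {x, y}. \<forall>u\<in>orth_compl U. b w u = 0"
    using orth_compl_orthogonal polar_commute by (metis (no_types))
  show "\<forall>w\<in>span {x, y}. \<forall>u\<in>orth_compl U. \<alpha> (w + u) = min (\<alpha> w) (\<alpha> u)"
    using alpha_add_orthogonal unfolding orth_compl_def by blast
qed

end

context compatible_quadratic_space
begin

theorem orthogonal_decomposition_exists:
  "splitting B \<Longrightarrow> 0 \<notin> B \<Longrightarrow> nondegenerate (span B) \<Longrightarrow>
    \<exists>n Vs. orthogonal_decomposition (span B) n Vs"
proof (induction "card B" arbitrary: B rule: less_induct)
  case less
  show ?case
  proof (cases "B = {}")
    case True
    then show ?thesis using orthogonal_decomposition_empty by blast
  next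
    case False
    then obtain x where x: "x \<in> B" by blast
    have "x \<noteq> 0" using x less.prems(2) by blast
    then obtain y where y: "y \<in> span B" "y \<noteq> 0" "v (b x y) = \<alpha> x + \<alpha> y + Fin \<epsilon>"
      using less.prems(3)[unfolded nondegenerate_def, rule_format, OF span_base[OF x]] by blast
    interpret xy: compatible_pair scale v q \<alpha> \<epsilon> x y
      by unfold_locales (use \<open>x \<noteq> 0\<close> y in auto)
    have "0 \<notin> {x, y}" "{x, y} \<subseteq> span B"
      using x y(1,2) less.prems(2) span_base by auto
    then obtain G where G: "G \<subseteq> B" "{x, y} \<inter> G = {}" "splitting ({x, y} \<union> G)"
        "span ({x, y} \<union> G) = span B"
      using splitting_extend[OF less.prems(1,2) xy.splitting_pair] by blast
    have "0 \<notin> G" using G(1) less.prems(2) by blast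
    note proj_G = splitting_isometric_image[OF xy.linear_proj splitting_subset[OF G(3) Un_upper2]
        xy.alpha_proj[OF G(3,2)]]
    have "G \<subset> B" using G(1,2) x by auto
    then have "card (xy.proj ` G) < card B"
      using psubset_card_mono[OF splitting_finite[OF less.prems(1)]] card_image[OF proj_G(2)]
      by simp
    moreover have "span (xy.proj ` G) = xy.orth_compl (span B)"
      using xy.span_proj_image G(4) splitting_finite[OF G(3)] by simp
    moreover have "nondegenerate (xy.orth_compl (span B))"
      using xy.nondegenerate_orth_compl[OF subspace_span span_base[OF x] y(1) less.prems(3)] .
    ultimately obtain n Vs where "orthogonal_decomposition (xy.orth_compl (span B)) n Vs"
      using less.hyps[of "xy.proj ` G"] proj_G(1,3) \<open>0 \<notin> G\<close> by auto
    then show ?thesis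
      using xy.orthogonal_decomposition_extend[OF subspace_span span_base[OF x] y(1)] by blast
  qed
qed

end

theorem proposition4p5:
  fixes scale :: "'a::field \<Rightarrow> 'v::ab_group_add \<Rightarrow> 'v"
    and v :: "'a \<Rightarrow> 'g::linordered_ab_group_add ext"
    and q :: "'v \<Rightarrow> 'a"
    and \<alpha> :: "'v \<Rightarrow> 'g ext"
    and \<epsilon> :: 'g
  assumes "divisible_group TYPE('g)"
    and "valuation v"
    and "vector_space scale"
    and "\<exists>B. finite B \<and> module.span scale B = UNIV"
    and "quadratic_form scale q"
    and "vnorm_on scale v UNIV \<alpha>"
    and "compatible_on v \<epsilon> UNIV q \<alpha>"
    and "0 \<le> \<epsilon>"
    and "Fin \<epsilon> < v 2"
  shows "\<exists>(n::nat) (Vs :: nat \<Rightarrow> 'v set).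
     (\<forall>i<n. module.subspace scale (Vs i) \<and> vector_space.dim scale (Vs i) = 2) \<and>
     (\<forall>x. \<exists>xs. (\<forall>i<n. xs i \<in> Vs i) \<and> x = (\<Sum>i<n. xs i)) \<and>
     (\<forall>xs. (\<forall>i<n. xs i \<in> Vs i) \<and> (\<Sum>i<n. xs i) = 0 \<longrightarrow> (\<forall>i<n. xs i = 0)) \<and>
     (\<forall>i<n. \<forall>j<n. i \<noteq> j \<longrightarrow> (\<forall>x\<in>Vs i. \<forall>y\<in>Vs j. polar q x y = 0)) \<and>
     (\<forall>i<n. vnorm_on scale v (Vs i) \<alpha> \<and> compatible_on v \<epsilon> (Vs i) q \<alpha>) \<and>
     (\<forall>xs. (\<forall>i<n. xs i \<in> Vs i) \<longrightarrow>
        \<alpha> (\<Sum>i<n. xs i) = ext_Min ((\<lambda>i. \<alpha> (xs i)) ` {..<n}))"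
proof -
  interpret compatible_quadratic_space scale v q \<alpha> \<epsilon>
    by (intro compatible_quadratic_space.intro compatible_quadratic_space_axioms.intro assms(2-7,9))
  obtain B where B: "splitting B" "independent B" "span B = UNIV"
    using assms(6) unfolding vnorm_on_def splitting_def by blast
  have "nondegenerate (span B)"
    using assms(7) unfolding B(3) nondegenerate_def compatible_on_def by blast
  then obtain n Vs where dec: "orthogonal_decomposition UNIV n Vs"
    using orthogonal_decomposition_exists[OF B(1)] dependent_zero[of B] B(2,3) by auto
  show ?thesis
  proof (intro exI conjI)
    show "\<forall>xs. (\<forall>i<n. xs i \<in> Vs i) \<and> (\<Sum>i<n. xs i) = 0 \<longrightarrow> (\<forall>i<n. xs i = 0)"
      using orthogonal_decomposition_sum_eq_zero[OF dec] by blast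
  qed (use dec in \<open>simp_all add: orthogonal_decomposition_def\<close>)
qed

end
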